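(* Let $\pi=(\pi_n^{n+1}\colon(X_{n+1},f_{n+1})\to(X_n,f_n))_{n\ge1}$ be an inverse sequence of equivariant maps satisfying MLC(1), and suppose $(X_n,f_n)$ is a subshift of finite type for each $n\ge1$. Let $Y_n=CR(f_n)$, $g_n=f_n|_{Y_n}$, and $\tilde\pi_n^{n+1}=\pi_n^{n+1}|_{Y_{n+1}}\colon Y_{n+1}\to Y_n$. Then the inverse sequence $\tilde\pi=(\tilde\pi_n^{n+1}\colon(Y_{n+1},g_{n+1})\to(Y_n,g_n))_{n\ge1}$ satisfies MLC(1).
   Context: Equivariant means $\pi_n^{n+1}$ is continuous with $f_n\circ\pi_n^{n+1}=\pi_n^{n+1}\circ f_{n+1}$. For $m\ge n$, $\pi_n^m=\pi_n^{n+1}\circ\cdots\circ\pi_{m-1}^m$. An inverse sequence $(p_n\colon Z_{n+1}\to Z_n)$ satisfies MLC(1) if $p_n(Z_{n+1})=p_n(p_{n+1}(Z_{n+2}))$ for every $n$. A subshift of finite type is a system $(Z,\sigma|_Z)$ where $S$ is a finite discrete set, $\sigma\colon S^{\mathbb N}\to S^{\mathbb N}$, $\sigma((x_i)_{i\ge1})=(x_{i+1})_{i\ge1}$, is the shift on the product space, and there are $N>0$ and $F\subset S^{N+1}$ with $Z=\{x\in S^{\mathbb N}:(x_i,\dots,x_{i+N})\in F\ \forall i\ge1\}$. For a continuous map $g$ of a compact metric space $(Y,d)$, $CR(g)$ is the set of $y$ such that for every $\delta>0$ there is a finite sequence $y=y_0,y_1,\dots,y_k=y$, $k>0$, with $d(g(y_i),y_{i+1})\le\delta$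 for all $i<k$. *)

theory Defs
  imports "HOL-Analysis.Analysis"
begin

text \<open>One-sided sequences over an alphabet; index 0 plays the role of index 1.\<close>

definition shift :: "(nat \<Rightarrow> 'a) \<Rightarrow> (nat \<Rightarrow> 'a)" where
  "shift x = (\<lambda>i. x (Suc i))"

text \<open>Z is a subshift of finite type over the finite alphabet S (the map is the shift).\<close>
definition is_sft :: "'a set \<Rightarrow> (nat \<Rightarrow> 'a) set \<Rightarrow> bool" where
  "is_sft S Z \<longleftrightarrow> finite S \<and>
     (\<exists>N>0. \<exists>F. F \<subseteq> {w. length w = N + 1 \<and> set w \<subseteq> S} \<and>
        Z = {x. (\<forall>i. x i \<in> S) \<and> (\<forall>i. map x [i..<i + N + 1] \<in> F)})"

definition seq_top :: "(nat \<Rightarrow> 'a) topology" where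
  "seq_top = product_topology (\<lambda>_. discrete_topology UNIV) UNIV"

definition seq_dist :: "(nat \<Rightarrow> 'a) \<Rightarrow> (nat \<Rightarrow> 'a) \<Rightarrow> real" where
  "seq_dist x y = (if x = y then 0 else (1/2) ^ (LEAST i. x i \<noteq> y i))"

definition chain_recurrent ::
  "('b \<Rightarrow> 'b \<Rightarrow> real) \<Rightarrow> 'b set \<Rightarrow> ('b \<Rightarrow> 'b) \<Rightarrow> 'b set" where
  "chain_recurrent d Y g = {y \<in> Y. \<forall>\<delta>>0. \<exists>k>0. \<exists>z::nat \<Rightarrow> 'b.
      z 0 = y \<and> z k = y \<and> (\<forall>i\<le>k. z i \<in> Y) \<and> (\<forall>i<k. d (g (z i)) (z (Suc i)) \<le> \<delta>)}"

definition MLC1 :: "(nat \<Rightarrow> 'b set) \<Rightarrow> (nat \<Rightarrow> 'b \<Rightarrow> 'b) \<Rightarrow> bool" where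
  "MLC1 Z p \<longleftrightarrow> (\<forall>n. p n ` Z (Suc n) = p n ` p (Suc n) ` Z (Suc (Suc n)))"

end

theory Submission
  imports Defs
begin

text \<open>Closeness in \<open>seq_dist\<close> is agreement on an initial segment, so everything is phrased
  in terms of \<open>agree m x y\<close>. A uniformly continuous equivariant map sends pseudo-orbits to
  pseudo-orbits, hence chain recurrent points to chain recurrent points.
  For MLC(1), take \<open>y \<in> Y (n+1)\<close>. In a subshift of finite type a chain recurrent point is a
  limit of periodic points \<open>q\<close>; then \<open>\<pi> n q\<close> is periodic of some period \<open>p\<close> and, by MLC(1)
  for \<open>X\<close>, equals \<open>\<pi> n (\<pi> (n+1) w)\<close>. All points \<open>(shift ^^ (j * p)) w\<close> have the same
  image, so an accumulation point of them is an \<open>\<omega>\<close>-limit point of \<open>w\<close>, hence lies in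
  \<open>Y (n+2)\<close>, and maps to \<open>\<pi> n q\<close>. Letting \<open>q \<rightarrow> y\<close>, compactness and closedness of
  \<open>Y (n+2)\<close> yield a preimage of \<open>\<pi> n y\<close>.\<close>

definition agree :: "nat \<Rightarrow> (nat \<Rightarrow> 'a) \<Rightarrow> (nat \<Rightarrow> 'a) \<Rightarrow> bool" where
  "agree m x y \<longleftrightarrow> (\<forall>i<m. x i = y i)"

lemma agree_refl [simp]: "agree m x x"
  by (simp add: agree_def)

lemma agree_sym: "agree m x y \<Longrightarrow> agree m y x"
  by (auto simp: agree_def)

lemma agree_trans: "agree m x y \<Longrightarrow> agree m y z \<Longrightarrow> agree m x z"
  by (auto simp: agree_def)

lemma agree_mono: "agree M x y \<Longrightarrow> m \<le> M \<Longrightarrow> agree m x y"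
  by (auto simp: agree_def)

lemma agree_Suc_shift: "agree (Suc m) x y \<Longrightarrow> agree m (shift x) (shift y)"
  by (auto simp: agree_def shift_def)

lemma eq_if_agree_all: "(\<And>m. agree m x y) \<Longrightarrow> x = y"
  unfolding agree_def by (meson lessI ext)

lemma seq_dist_le_half_power_iff: "seq_dist x y \<le> (1/2) ^ m \<longleftrightarrow> agree m x y"
proof (cases "x = y")
  case False
  define L where "L = (LEAST i. x i \<noteq> y i)"
  have "x L \<noteq> y L"
    using False LeastI_ex[of "\<lambda>i. x i \<noteq> y i"] by (auto simp: L_def)
  moreover have "x i = y i" if "i < L" for i
    using not_less_Least[OF that[unfolded L_def]] by blast
  ultimately have "agree m x y \<longleftrightarrow> m \<le> L"
    unfolding agree_def by (meson leI less_le_trans)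
  moreover have "seq_dist x y = (1/2) ^ L"
    using False by (simp add: seq_dist_def L_def)
  ultimately show ?thesis
    by (simp add: power_decreasing_iff)
qed (simp add: seq_dist_def)

text \<open>\<open>z 0, \<dots>, z k\<close> is a \<open>(1/2)\<^sup>m\<close>-pseudo-orbit of the shift in \<open>X\<close>.\<close>

definition agree_chain :: "(nat \<Rightarrow> 'a) set \<Rightarrow> nat \<Rightarrow> nat \<Rightarrow> (nat \<Rightarrow> nat \<Rightarrow> 'a) \<Rightarrow> bool" where
  "agree_chain X m k z \<longleftrightarrow> (\<forall>i\<le>k. z i \<in> X) \<and> (\<forall>i<k. agree m (shift (z i)) (z (Suc i)))"

lemma chain_recurrent_seq_dist_iff:
  "y \<in> chain_recurrent seq_dist X shift \<longleftrightarrow>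
     y \<in> X \<and> (\<forall>m. \<exists>k>0. \<exists>z. z 0 = y \<and> z k = y \<and> agree_chain X m k z)"
proof -
  define cycle where "cycle \<delta> \<longleftrightarrow> (\<exists>k>0. \<exists>z. z 0 = y \<and> z k = y \<and> (\<forall>i\<le>k. z i \<in> X) \<and>
    (\<forall>i<k. seq_dist (shift (z i)) (z (Suc i)) \<le> \<delta>))" for \<delta> :: real
  have cycle_mono: "cycle \<epsilon>" if "cycle \<delta>" and "\<delta> \<le> \<epsilon>" for \<delta> \<epsilon>
  proof -
    obtain k z where "k > 0" "z 0 = y" "z k = y" "\<forall>i\<le>k. z i \<in> X"
      and steps: "\<forall>i<k. seq_dist (shift (z i)) (z (Suc i)) \<le> \<delta>"
      using \<open>cycle \<delta>\<close> unfolding cycle_def by blast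
    moreover have "\<forall>i<k. seq_dist (shift (z i)) (z (Suc i)) \<le> \<epsilon>"
      using steps \<open>\<delta> \<le> \<epsilon>\<close> by force
    ultimately show ?thesis
      unfolding cycle_def by (intro exI[of _ k] conjI exI[of _ z])
  qed
  have "(\<forall>\<delta>>0. cycle \<delta>) \<longleftrightarrow> (\<forall>m. cycle ((1/2) ^ m))"
  proof
    assume "\<forall>m. cycle ((1/2) ^ m)"
    show "\<forall>\<delta>>0. cycle \<delta>"
    proof (intro allI impI)
      fix \<delta> :: real
      assume "\<delta> > 0"
      then obtain m where "(1/2) ^ m < \<delta>"
        using real_arch_pow_inv[of \<delta> "1/2"] by force
      then show "cycle \<delta>"
        using cycle_mono \<open>\<forall>m. cycle ((1/2) ^ m)\<close> by (meson less_imp_le)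
    qed
  qed simp
  moreover have "cycle ((1/2) ^ m) \<longleftrightarrow> (\<exists>k>0. \<exists>z. z 0 = y \<and> z k = y \<and> agree_chain X m k z)" for m
    unfolding cycle_def agree_chain_def seq_dist_le_half_power_iff ..
  moreover have "y \<in> chain_recurrent seq_dist X shift \<longleftrightarrow> y \<in> X \<and> (\<forall>\<delta>>0. cycle \<delta>)"
    unfolding chain_recurrent_def cycle_def by (simp only: mem_Collect_eq)
  ultimately show ?thesis
    by presburger
qed

lemma agree_chain_perturb:
  assumes "agree_chain X m k u" "\<And>i. i \<le> k \<Longrightarrow> z i \<in> X"
    and "\<And>i. i \<le> k \<Longrightarrow> agree (Suc m) (z i) (u i)"
  shows "agree_chain X m k z"
  unfolding agree_chain_def
proof (intro conjI allI impI)
  fix i assume "i < k"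
  have "agree m (shift (z i)) (shift (u i))"
    using assms(3) \<open>i < k\<close> by (simp add: agree_Suc_shift)
  moreover have "agree m (shift (u i)) (u (Suc i))"
    using assms(1) \<open>i < k\<close> by (simp add: agree_chain_def)
  moreover have "agree m (u (Suc i)) (z (Suc i))"
    using agree_sym[OF agree_mono[OF assms(3)[of "Suc i"]]] \<open>i < k\<close> by simp
  ultimately show "agree m (shift (z i)) (z (Suc i))"
    by (meson agree_trans)
qed (use assms(2) in simp)

lemma chain_recurrent_seq_dist_closed:
  assumes "v \<in> X" and approx: "\<And>M. \<exists>x \<in> chain_recurrent seq_dist X shift. agree M x v"
  shows "v \<in> chain_recurrent seq_dist X shift"
  unfolding chain_recurrent_seq_dist_iff
proof (intro conjI allI)
  fix m
  obtain x where x: "x \<in> chain_recurrent seq_dist X shift" "agree (Suc m) x v"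
    using approx by blast
  have "\<exists>k>0. \<exists>u. u 0 = x \<and> u k = x \<and> agree_chain X m k u"
    using x(1) by (simp add: chain_recurrent_seq_dist_iff)
  then obtain k u where "k > 0" "u 0 = x" "u k = x" "agree_chain X m k u"
    by blast
  define z where "z i = (if i = 0 \<or> i = k then v else u i)" for i
  have "agree_chain X m k z"
  proof (rule agree_chain_perturb[OF \<open>agree_chain X m k u\<close>])
    show "z i \<in> X" if "i \<le> k" for i
      using that \<open>v \<in> X\<close> \<open>agree_chain X m k u\<close> by (simp add: z_def agree_chain_def)
    show "agree (Suc m) (z i) (u i)" if "i \<le> k" for i
      using agree_sym[OF x(2)] \<open>u 0 = x\<close> \<open>u k = x\<close> by (simp add: z_def)
  qed
  moreover have "z 0 = v" "z k = v"
    by (simp_all add: z_def)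
  ultimately show "\<exists>k>0. \<exists>z. z 0 = v \<and> z k = v \<and> agree_chain X m k z"
    using \<open>k > 0\<close> by (intro exI[of _ k] conjI exI[of _ z])
qed (fact assms(1))

lemma funpow_mem_invariant: "(\<And>x. x \<in> X \<Longrightarrow> g x \<in> X) \<Longrightarrow> x \<in> X \<Longrightarrow> (g ^^ j) x \<in> X"
  by (induction j) auto

lemma funpow_shift: "(shift ^^ j) x = (\<lambda>i. x (i + j))"
  by (induction j arbitrary: x) (auto simp: shift_def funpow_Suc_right)

lemma funpow_shift_commute:
  assumes "\<And>x. x \<in> X \<Longrightarrow> shift x \<in> X" and "\<And>x. x \<in> X \<Longrightarrow> shift (f x) = f (shift x)"
    and "x \<in> X"
  shows "(shift ^^ j) (f x) = f ((shift ^^ j) x)"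
proof (induction j)
  case (Suc j)
  have "(shift ^^ j) x \<in> X"
    using funpow_mem_invariant[of X shift, OF assms(1) assms(3)] .
  then show ?case
    using Suc assms(2) by simp
qed simp

lemma sft_finite_alphabet: "is_sft S X \<Longrightarrow> finite S"
  by (simp add: is_sft_def)

lemma sft_values: "is_sft S X \<Longrightarrow> x \<in> X \<Longrightarrow> x i \<in> S"
  unfolding is_sft_def by blast

lemma sft_window_criterion:
  assumes "is_sft S X"
  obtains N where "\<And>v. (\<And>i. \<exists>x\<in>X. \<exists>j. \<forall>s\<le>N. v (i + s) = x (j + s)) \<Longrightarrow> v \<in> X"
proof -
  obtain N F where X: "X = {x. (\<forall>i. x i \<in> S) \<and> (\<forall>i. map x [i..<i + N + 1] \<in> F)}"
    using assms unfolding is_sft_def by blast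
  have "v \<in> X" if windows: "\<And>i. \<exists>x\<in>X. \<exists>j. \<forall>s\<le>N. v (i + s) = x (j + s)" for v
  proof -
    have "v i \<in> S \<and> map v [i..<i + N + 1] \<in> F" for i
    proof -
      obtain x j where x: "x \<in> X" "\<forall>s\<le>N. v (i + s) = x (j + s)"
        using windows by blast
      have "v i = x j"
        using x(2)[rule_format, of 0] by simp
      moreover have "map v [i..<i + N + 1] = map x [j..<j + N + 1]"
        by (rule nth_equalityI) (use x(2) in \<open>auto simp del: upt_Suc\<close>)
      ultimately show ?thesis
        using x(1) X by auto
    qed
    then show ?thesis
      using X by auto
  qed
  then show ?thesis
    by (rule that)
qed

lemma sft_shift:
  assumes "is_sft S X" and "x \<in> X"
  shows "shift x \<in> X"
proof -
  obtain N where windows: "\<And>v. (\<And>i. \<exists>x\<in>X. \<exists>j. \<forall>s\<le>N. v (i + s) = x (j + s)) \<Longrightarrow> v \<in> X"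
    using sft_window_criterion[OF assms(1)] by blast
  show ?thesis
  proof (rule windows)
    fix i
    have "\<forall>s\<le>N. shift x (i + s) = x (Suc i + s)"
      by (simp add: shift_def)
    then show "\<exists>x'\<in>X. \<exists>j. \<forall>s\<le>N. shift x (i + s) = x' (j + s)"
      using assms(2) by blast
  qed
qed

lemma sft_closed:
  assumes "is_sft S X" and approx: "\<And>M. \<exists>x\<in>X. agree M x v"
  shows "v \<in> X"
proof -
  obtain N where windows: "\<And>v. (\<And>i. \<exists>x\<in>X. \<exists>j. \<forall>s\<le>N. v (i + s) = x (j + s)) \<Longrightarrow> v \<in> X"
    using sft_window_criterion[OF assms(1)] by blast
  show ?thesis
  proof (rule windows)
    fix i
    obtain x where "x \<in> X" "agree (i + N + 1) x v"
      using approx by blast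
    then have "\<forall>s\<le>N. v (i + s) = x (i + s)"
      by (auto simp: agree_def)
    then show "\<exists>x\<in>X. \<exists>j. \<forall>s\<le>N. v (i + s) = x (j + s)"
      using \<open>x \<in> X\<close> by blast
  qed
qed

lemma finite_alphabet_cluster_point:
  fixes w :: "nat \<Rightarrow> nat \<Rightarrow> 'a"
  assumes "finite S" and "\<And>j i. w j i \<in> S"
  obtains v where "\<And>M. infinite {j. agree M (w j) v}"
proof -
  have pigeonhole: "\<exists>a. a \<in> S \<and> infinite {j\<in>A. w j i = a}" if "infinite A" for A i
  proof (rule ccontr)
    assume "\<not> ?thesis"
    then have "finite (\<Union>a\<in>S. {j\<in>A. w j i = a})"
      using assms(1) by auto
    moreover have "A = (\<Union>a\<in>S. {j\<in>A. w j i = a})"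
      using assms(2) by auto
    ultimately show False
      using that by simp
  qed
  \<comment> \<open>Koenig's argument: \<open>J i\<close> is a decreasing sequence of infinite index sets on which the
    first \<open>i\<close> letters are constant.\<close>
  define letter where "letter A i = (SOME a. a \<in> S \<and> infinite {j\<in>A. w j i = a})" for A i
  define J where "J = rec_nat UNIV (\<lambda>i A. {j\<in>A. w j i = letter A i})"
  have J_Suc: "J (Suc i) = {j \<in> J i. w j i = letter (J i) i}" for i
    by (simp add: J_def)
  have J_infinite: "infinite (J i)" for i
  proof (induction i)
    case 0
    then show ?case
      by (simp add: J_def)
  next
    case (Suc i)
    then show ?case
      unfolding J_Suc letter_def using someI_ex[OF pigeonhole[OF Suc, of i]] by blast
  qed
  have J_antimono: "J i' \<subseteq> J i" if "i \<le> i'" for i i'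
    using that by (induction i' rule: dec_induct) (auto simp: J_Suc)
  define v where "v i = letter (J i) i" for i
  have "J M \<subseteq> {j. agree M (w j) v}" for M
  proof
    fix j assume "j \<in> J M"
    have "w j i = v i" if "i < M" for i
      using J_antimono[of "Suc i" M] that \<open>j \<in> J M\<close> by (auto simp: J_Suc v_def)
    then show "j \<in> {j. agree M (w j) v}"
      by (simp add: agree_def)
  qed
  then show ?thesis
    using that J_infinite infinite_super by blast
qed

lemma sft_cluster_point:
  fixes w :: "nat \<Rightarrow> nat \<Rightarrow> 'a"
  assumes "is_sft S X" and "\<And>j. w j \<in> X"
  obtains v where "v \<in> X" "\<And>M. infinite {j. agree M (w j) v}"
proof -
  have "w j i \<in> S" for j i
    using sft_values[OF assms(1) assms(2)] .
  then obtain v where v: "\<And>M. infinite {j. agree M (w j) v}"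
    using finite_alphabet_cluster_point[OF sft_finite_alphabet[OF assms(1)]] by blast
  have "v \<in> X"
  proof (rule sft_closed[OF assms(1)])
    fix M
    obtain j where "agree M (w j) v"
      using not_finite_existsD[OF v[of M]] by blast
    then show "\<exists>x\<in>X. agree M x v"
      using assms(2) by blast
  qed
  then show ?thesis
    using v by (rule that)
qed

text \<open>Reading off the first symbols along a closed chain whose steps agree on \<open>M + N\<close> symbols
  produces a periodic sequence all of whose windows of length \<open>N + 1\<close> occur in \<open>X\<close>.\<close>

lemma sft_periodic_approx:
  assumes "is_sft S X" and "y \<in> chain_recurrent seq_dist X shift"
  obtains q k where "q \<in> X" "k > 0" "(shift ^^ k) q = q" "agree M q y"
proof -
  obtain N where windows: "\<And>v. (\<And>i. \<exists>x\<in>X. \<exists>j. \<forall>s\<le>N. v (i + s) = x (j + s)) \<Longrightarrow> v \<in> X"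
    using sft_window_criterion[OF assms(1)] by blast
  have "\<exists>k>0. \<exists>z. z 0 = y \<and> z k = y \<and> agree_chain X (M + N) k z"
    using assms(2) by (simp add: chain_recurrent_seq_dist_iff)
  then obtain k z where "k > 0" "z 0 = y" "z k = y" and chain: "agree_chain X (M + N) k z"
    by blast
  define q where "q t = z (t mod k) 0" for t
  have q_window: "q (t + s) = z (t mod k) s" if "s \<le> M + N" for s t
    using that
  proof (induction s arbitrary: t)
    case 0
    then show ?case
      by (simp add: q_def)
  next
    case (Suc s)
    have "t mod k < k"
      using \<open>k > 0\<close> by simp
    then have "z (t mod k) (Suc s) = z (Suc (t mod k)) s"
      using chain Suc.prems by (auto simp: agree_chain_def agree_def shift_def)
    also have "\<dots> = z (Suc t mod k) s"
      using \<open>z 0 = y\<close> \<open>z k = y\<close> by (simp add: mod_Suc)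
    also have "\<dots> = q (Suc t + s)"
      using Suc.IH[of "Suc t"] Suc.prems by simp
    finally show ?case
      by simp
  qed
  have "q \<in> X"
  proof (rule windows)
    fix i
    have "z (i mod k) \<in> X"
      using chain \<open>k > 0\<close> by (simp add: agree_chain_def)
    moreover have "\<forall>s\<le>N. q (i + s) = z (i mod k) (0 + s)"
      using q_window by force
    ultimately show "\<exists>x\<in>X. \<exists>j. \<forall>s\<le>N. q (i + s) = x (j + s)"
      by blast
  qed
  moreover have "(shift ^^ k) q = q"
    by (simp add: funpow_shift fun_eq_iff q_def)
  moreover have "agree M q y"
    unfolding agree_def
  proof (intro allI impI)
    fix i assume "i < M"
    then show "q i = y i"
      using q_window[of i 0] \<open>z 0 = y\<close> by simp
  qed
  ultimately show ?thesis
    using that \<open>k > 0\<close> by blast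
qed

definition agree_continuous_on :: "(nat \<Rightarrow> 'a) set \<Rightarrow> ((nat \<Rightarrow> 'a) \<Rightarrow> nat \<Rightarrow> 'b) \<Rightarrow> bool" where
  "agree_continuous_on X f \<longleftrightarrow>
     (\<forall>x\<in>X. \<forall>m. \<exists>M. \<forall>x'\<in>X. agree M x' x \<longrightarrow> agree m (f x') (f x))"

definition agree_uniformly_continuous_on ::
  "(nat \<Rightarrow> 'a) set \<Rightarrow> ((nat \<Rightarrow> 'a) \<Rightarrow> nat \<Rightarrow> 'b) \<Rightarrow> bool" where
  "agree_uniformly_continuous_on X f \<longleftrightarrow>
     (\<forall>m. \<exists>M. \<forall>x\<in>X. \<forall>x'\<in>X. agree M x' x \<longrightarrow> agree m (f x') (f x))"

lemma continuous_map_seq_top_imp_agree_continuous_on: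
  assumes cont: "continuous_map (subtopology seq_top X) (subtopology seq_top X') f"
  shows "agree_continuous_on X f"
  unfolding agree_continuous_on_def
proof (intro ballI allI)
  fix x m assume "x \<in> X"
  define U :: "(nat \<Rightarrow> 'b) set" where "U = PiE UNIV (\<lambda>i. if i < m then {f x i} else UNIV)"
  have U_iff: "u \<in> U \<longleftrightarrow> agree m u (f x)" for u
    by (auto simp: U_def PiE_def extensional_def agree_def Pi_def)
  have "finite {i. (if i < m then {f x i} else UNIV) \<noteq> (UNIV :: 'b set)}"
    by (rule finite_subset[of _ "{..<m}"]) auto
  then have "openin seq_top U"
    unfolding seq_top_def U_def by (subst openin_PiE_gen) auto
  then have "openin (subtopology seq_top X') (U \<inter> X')"
    by (auto simp: openin_subtopology)
  then have "openin (subtopology seq_top X) {x' \<in> topspace (subtopology seq_top X). f x' \<in> U \<inter> X'}"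
    using cont unfolding continuous_map_def by blast
  moreover have "topspace (subtopology seq_top X) = X"
    by (simp add: seq_top_def)
  ultimately obtain T where "openin seq_top T" and T: "{x' \<in> X. f x' \<in> U \<inter> X'} = T \<inter> X"
    by (auto simp: openin_subtopology)
  have "f x \<in> X'"
    using cont \<open>x \<in> X\<close> by (auto simp: continuous_map_def seq_top_def)
  then have "x \<in> {x' \<in> X. f x' \<in> U \<inter> X'}"
    using \<open>x \<in> X\<close> U_iff[of "f x"] by simp
  then have "x \<in> T"
    unfolding T by simp
  then obtain V where V_finite: "finite {i. V i \<noteq> UNIV}" and "x \<in> PiE UNIV V" "PiE UNIV V \<subseteq> T"
    using \<open>openin seq_top T\<close> unfolding seq_top_def openin_product_topology_alt by auto
  obtain M where M: "{i. V i \<noteq> UNIV} \<subseteq> {..<M}"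
    using finite_nat_bounded[OF V_finite] by blast
  have "agree m (f x') (f x)" if "x' \<in> X" "agree M x' x" for x'
  proof -
    have "x' i \<in> V i" for i
    proof (cases "i < M")
      case True
      then show ?thesis
        using that(2) \<open>x \<in> PiE UNIV V\<close> by (auto simp: agree_def)
    next
      case False
      then have "V i = UNIV"
        using M by blast
      then show ?thesis
        by simp
    qed
    then have "x' \<in> T \<inter> X"
      using \<open>PiE UNIV V \<subseteq> T\<close> \<open>x' \<in> X\<close> by (auto simp: PiE_def extensional_def)
    then show ?thesis
      using T U_iff by blast
  qed
  then show "\<exists>M. \<forall>x'\<in>X. agree M x' x \<longrightarrow> agree m (f x') (f x)"
    by blast
qed

lemma agree_continuous_on_compose:
  assumes "agree_continuous_on X f" and "f ` X \<subseteq> X'" and "agree_continuous_on X' g"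
  shows "agree_continuous_on X (g \<circ> f)"
  unfolding agree_continuous_on_def
proof (intro ballI allI)
  fix x m assume "x \<in> X"
  then obtain M' where M': "\<forall>y\<in>X'. agree M' y (f x) \<longrightarrow> agree m (g y) (g (f x))"
    using assms(2,3) unfolding agree_continuous_on_def by blast
  obtain M where M: "\<forall>x'\<in>X. agree M x' x \<longrightarrow> agree M' (f x') (f x)"
    using assms(1) \<open>x \<in> X\<close> unfolding agree_continuous_on_def by blast
  have "agree m ((g \<circ> f) x') ((g \<circ> f) x)" if "x' \<in> X" "agree M x' x" for x'
    using M M' assms(2) that by auto
  then show "\<exists>M. \<forall>x'\<in>X. agree M x' x \<longrightarrow> agree m ((g \<circ> f) x') ((g \<circ> f) x)"
    by blast
qed

lemma agree_continuous_on_cluster_point: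
  fixes w :: "nat \<Rightarrow> nat \<Rightarrow> 'a"
  assumes "agree_continuous_on X f" and "v \<in> X" and "\<And>j. w j \<in> X"
    and "\<And>M. infinite {j. agree M (w j) v}"
    and "\<And>m. \<exists>J. \<forall>j\<ge>J. agree m (f (w j)) c"
  shows "f v = c"
proof (rule eq_if_agree_all)
  fix m
  obtain M where M: "\<forall>x'\<in>X. agree M x' v \<longrightarrow> agree m (f x') (f v)"
    using assms(1,2) unfolding agree_continuous_on_def by blast
  obtain J where J: "\<forall>j\<ge>J. agree m (f (w j)) c"
    using assms(5) by blast
  obtain j where "j \<ge> J" "agree M (w j) v"
    using assms(4)[of M] unfolding infinite_nat_iff_unbounded_le by blast
  then have "agree m (f (w j)) (f v)" and wj: "agree m (f (w j)) c"
    using M J assms(3) by blast+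
  then show "agree m (f v) c"
    using agree_trans[OF agree_sym wj] by blast
qed

lemma sft_agree_uniformly_continuous_on:
  assumes "is_sft S X" and cont: "agree_continuous_on X f"
  shows "agree_uniformly_continuous_on X f"
  unfolding agree_uniformly_continuous_on_def
proof (rule allI, rule ccontr)
  fix m
  assume "\<not> (\<exists>M. \<forall>x\<in>X. \<forall>x'\<in>X. agree M x' x \<longrightarrow> agree m (f x') (f x))"
  then have "\<forall>M. \<exists>p. fst p \<in> X \<and> snd p \<in> X \<and> agree M (snd p) (fst p) \<and>
      \<not> agree m (f (snd p)) (f (fst p))"
    by (metis fst_conv snd_conv)
  then obtain p where bad: "\<And>M. fst (p M) \<in> X \<and> snd (p M) \<in> X \<and>
      agree M (snd (p M)) (fst (p M)) \<and> \<not> agree m (f (snd (p M))) (f (fst (p M)))"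
    by metis
  define x where "x M = fst (p M)" for M
  define x' where "x' M = snd (p M)" for M
  have "x j \<in> X" for j
    using bad by (simp add: x_def)
  then obtain v where "v \<in> X" and v: "\<And>M. infinite {j. agree M (x j) v}"
    using sft_cluster_point[OF assms(1)] by blast
  obtain M where M: "\<forall>y\<in>X. agree M y v \<longrightarrow> agree m (f y) (f v)"
    using cont \<open>v \<in> X\<close> unfolding agree_continuous_on_def by blast
  obtain j where "j \<ge> M" and close: "agree M (x j) v"
    using v[of M] unfolding infinite_nat_iff_unbounded_le by blast
  have "agree M (x' j) (x j)"
    using agree_mono[of j "x' j" "x j" M] bad[of j] \<open>j \<ge> M\<close> by (simp add: x_def x'_def)
  then have "agree m (f (x' j)) (f v)"
    using M bad[of j] agree_trans[OF _ close] by (simp add: x'_def)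
  moreover have "agree m (f (x j)) (f v)"
    using M bad[of j] close by (simp add: x_def)
  ultimately have "agree m (f (x' j)) (f (x j))"
    using agree_trans agree_sym by blast
  then show False
    using bad[of j] by (simp add: x_def x'_def)
qed

lemma image_chain_recurrent_subset:
  assumes shift_X: "\<And>x. x \<in> X \<Longrightarrow> shift x \<in> X" and maps: "f ` X \<subseteq> X'"
    and ucont: "agree_uniformly_continuous_on X f"
    and equiv: "\<And>x. x \<in> X \<Longrightarrow> shift (f x) = f (shift x)"
  shows "f ` chain_recurrent seq_dist X shift \<subseteq> chain_recurrent seq_dist X' shift"
proof (rule image_subsetI)
  fix y assume y: "y \<in> chain_recurrent seq_dist X shift"
  show "f y \<in> chain_recurrent seq_dist X' shift"
    unfolding chain_recurrent_seq_dist_iff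
  proof (intro conjI allI)
    show "f y \<in> X'"
      using y maps by (auto simp: chain_recurrent_seq_dist_iff)
    fix m
    obtain M where M: "\<forall>x\<in>X. \<forall>x'\<in>X. agree M x' x \<longrightarrow> agree m (f x') (f x)"
      using ucont unfolding agree_uniformly_continuous_on_def by blast
    have "\<exists>k>0. \<exists>z. z 0 = y \<and> z k = y \<and> agree_chain X M k z"
      using y by (simp add: chain_recurrent_seq_dist_iff)
    then obtain k z where "k > 0" "z 0 = y" "z k = y" and chain: "agree_chain X M k z"
      by blast
    have "agree_chain X' m k (f \<circ> z)"
      unfolding agree_chain_def
    proof (intro conjI allI impI)
      fix i assume "i \<le> k"
      then show "(f \<circ> z) i \<in> X'"
        using chain maps by (auto simp: agree_chain_def)
    next
      fix i assume "i < k"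
      then have "z i \<in> X" "z (Suc i) \<in> X" "agree M (shift (z i)) (z (Suc i))"
        using chain by (auto simp: agree_chain_def)
      then have "agree m (f (shift (z i))) (f (z (Suc i)))"
        using M shift_X by blast
      then show "agree m (shift ((f \<circ> z) i)) ((f \<circ> z) (Suc i))"
        using equiv \<open>z i \<in> X\<close> by simp
    qed
    then show "\<exists>k>0. \<exists>z. z 0 = f y \<and> z k = f y \<and> agree_chain X' m k z"
      using \<open>k > 0\<close> \<open>z 0 = y\<close> \<open>z k = y\<close> by (intro exI[of _ k] conjI exI[of _ "f \<circ> z"]) simp_all
  qed
qed

text \<open>Two close returns of the orbit of \<open>w\<close> to \<open>v\<close> bound a closed pseudo-orbit through \<open>v\<close>.\<close>

lemma omega_limit_point_chain_recurrent:
  assumes shift_X: "\<And>x. x \<in> X \<Longrightarrow> shift x \<in> X" and "w \<in> X" and "v \<in> X"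
    and returns: "\<And>M. infinite {t. agree M ((shift ^^ t) w) v}"
  shows "v \<in> chain_recurrent seq_dist X shift"
  unfolding chain_recurrent_seq_dist_iff
proof (intro conjI allI)
  fix m
  obtain t1 where t1: "agree (Suc m) ((shift ^^ t1) w) v"
    using not_finite_existsD[OF returns[of "Suc m"]] by blast
  obtain t2 where "t2 > t1" and t2: "agree (Suc m) ((shift ^^ t2) w) v"
    using returns[of "Suc m"] unfolding infinite_nat_iff_unbounded by blast
  define k where "k = t2 - t1"
  define u where "u i = (shift ^^ (t1 + i)) w" for i
  have "agree_chain X m k u"
    using funpow_mem_invariant[of X shift, OF shift_X \<open>w \<in> X\<close>] by (simp add: agree_chain_def u_def)
  define z where "z i = (if i = 0 \<or> i = k then v else u i)" for i
  have "agree_chain X m k z"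
  proof (rule agree_chain_perturb[OF \<open>agree_chain X m k u\<close>])
    show "z i \<in> X" if "i \<le> k" for i
      using that \<open>v \<in> X\<close> \<open>agree_chain X m k u\<close> by (simp add: z_def agree_chain_def)
    have "u 0 = (shift ^^ t1) w" "u k = (shift ^^ t2) w"
      using \<open>t2 > t1\<close> by (simp_all add: u_def k_def)
    then show "agree (Suc m) (z i) (u i)" if "i \<le> k" for i
      using agree_sym[OF t1] agree_sym[OF t2] by (simp add: z_def)
  qed
  moreover have "z 0 = v" "z k = v" "k > 0"
    using \<open>t2 > t1\<close> by (simp_all add: z_def k_def)
  ultimately show "\<exists>k>0. \<exists>z. z 0 = v \<and> z k = v \<and> agree_chain X m k z"
    by (intro exI[of _ k] conjI exI[of _ z])
qed (fact \<open>v \<in> X\<close>)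

lemma periodic_point_in_image_chain_recurrent:
  assumes sft: "is_sft S X" and cont: "agree_continuous_on X A"
    and equiv: "\<And>x. x \<in> X \<Longrightarrow> shift (A x) = A (shift x)"
    and "w \<in> X" and "p > 0" and periodic: "(shift ^^ p) (A w) = A w"
  shows "A w \<in> A ` chain_recurrent seq_dist X shift"
proof -
  have shift_X: "\<And>x. x \<in> X \<Longrightarrow> shift x \<in> X"
    using sft_shift[OF sft] .
  define ws where "ws j = (shift ^^ (j * p)) w" for j
  have ws_X: "ws j \<in> X" for j
    unfolding ws_def using funpow_mem_invariant[of X shift, OF shift_X \<open>w \<in> X\<close>] .
  have A_ws: "A (ws j) = A w" for j
  proof -
    have "A (ws j) = (shift ^^ (j * p)) (A w)"
      unfolding ws_def using funpow_shift_commute[of X A, OF shift_X equiv \<open>w \<in> X\<close>] by simp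
    also have "\<dots> = A w"
      using funpow_mod_eq[OF periodic, of "j * p", symmetric] by simp
    finally show ?thesis .
  qed
  obtain v where "v \<in> X" and v: "\<And>M. infinite {j. agree M (ws j) v}"
    using sft_cluster_point[where w = ws, OF sft ws_X] by blast
  have "A v = A w"
    by (rule agree_continuous_on_cluster_point[OF cont \<open>v \<in> X\<close> ws_X v]) (simp add: A_ws)
  moreover have "v \<in> chain_recurrent seq_dist X shift"
  proof (rule omega_limit_point_chain_recurrent[OF shift_X \<open>w \<in> X\<close> \<open>v \<in> X\<close>])
    fix M
    have "(\<lambda>j. j * p) ` {j. agree M (ws j) v} \<subseteq> {t. agree M ((shift ^^ t) w) v}"
      by (auto simp: ws_def)
    moreover have "infinite ((\<lambda>j. j * p) ` {j. agree M (ws j) v})"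
      using v[of M] \<open>p > 0\<close> by (simp add: finite_image_iff inj_on_def)
    ultimately show "infinite {t. agree M ((shift ^^ t) w) v}"
      using infinite_super by blast
  qed
  ultimately show ?thesis
    by (metis image_eqI)
qed

lemma sft_image_closed:
  assumes sft: "is_sft S X" and "C \<subseteq> X"
    and C_closed: "\<And>v. v \<in> X \<Longrightarrow> (\<And>M. \<exists>x\<in>C. agree M x v) \<Longrightarrow> v \<in> C"
    and cont: "agree_continuous_on X A"
    and approx: "\<And>m. \<exists>x\<in>C. agree m (A x) c"
  shows "c \<in> A ` C"
proof -
  have "\<forall>m. \<exists>x. x \<in> C \<and> agree m (A x) c"
    using approx by blast
  then obtain w where w: "\<And>m. w m \<in> C \<and> agree m (A (w m)) c"
    by metis
  then have w_X: "w j \<in> X" for j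
    using \<open>C \<subseteq> X\<close> by blast
  obtain v where "v \<in> X" and v: "\<And>M. infinite {j. agree M (w j) v}"
    using sft_cluster_point[where w = w, OF sft w_X] by blast
  have "v \<in> C"
  proof (rule C_closed[OF \<open>v \<in> X\<close>])
    fix M
    obtain j where "agree M (w j) v"
      using not_finite_existsD[OF v[of M]] by blast
    then show "\<exists>x\<in>C. agree M x v"
      using w by blast
  qed
  moreover have "A v = c"
  proof (rule agree_continuous_on_cluster_point[OF cont \<open>v \<in> X\<close> w_X v])
    fix m
    have "\<forall>j\<ge>m. agree m (A (w j)) c"
      using w agree_mono by blast
    then show "\<exists>J. \<forall>j\<ge>J. agree m (A (w j)) c"
      by blast
  qed
  ultimately show ?thesis
    by blast
qed

lemma image_chain_recurrent_subset_image:
  assumes sft_X: "is_sft S X" and sft_W: "is_sft T W"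
    and f_cont: "agree_continuous_on X f" and f_equiv: "\<And>x. x \<in> X \<Longrightarrow> shift (f x) = f (shift x)"
    and A_cont: "agree_continuous_on W A" and A_equiv: "\<And>x. x \<in> W \<Longrightarrow> shift (A x) = A (shift x)"
    and lift: "f ` X \<subseteq> A ` W"
  shows "f ` chain_recurrent seq_dist X shift \<subseteq> A ` chain_recurrent seq_dist W shift"
proof (rule image_subsetI)
  fix y assume y: "y \<in> chain_recurrent seq_dist X shift"
  then have "y \<in> X"
    by (simp add: chain_recurrent_seq_dist_iff)
  show "f y \<in> A ` chain_recurrent seq_dist W shift"
  proof (rule sft_image_closed[OF sft_W _ chain_recurrent_seq_dist_closed A_cont])
    show "chain_recurrent seq_dist W shift \<subseteq> W"
      by (auto simp: chain_recurrent_seq_dist_iff)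
    fix m
    obtain M where M: "\<forall>x'\<in>X. agree M x' y \<longrightarrow> agree m (f x') (f y)"
      using f_cont \<open>y \<in> X\<close> unfolding agree_continuous_on_def by blast
    obtain q k where "q \<in> X" "k > 0" "(shift ^^ k) q = q" "agree M q y"
      by (rule sft_periodic_approx[OF sft_X y])
    have "(shift ^^ k) (f q) = f q"
      using funpow_shift_commute[of X f, OF sft_shift[OF sft_X] f_equiv \<open>q \<in> X\<close>]
        \<open>(shift ^^ k) q = q\<close> by simp
    moreover obtain w where "w \<in> W" "f q = A w"
      using lift \<open>q \<in> X\<close> by blast
    ultimately have "f q \<in> A ` chain_recurrent seq_dist W shift"
      using periodic_point_in_image_chain_recurrent[OF sft_W A_cont A_equiv \<open>w \<in> W\<close> \<open>k > 0\<close>]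
      by simp
    moreover have "agree m (f q) (f y)"
      using M \<open>q \<in> X\<close> \<open>agree M q y\<close> by blast
    ultimately show "\<exists>v\<in>chain_recurrent seq_dist W shift. agree m (A v) (f y)"
      by auto
  qed
qed

theorem lemma4p2:
  fixes S :: "nat \<Rightarrow> 'a set"
    and X :: "nat \<Rightarrow> (nat \<Rightarrow> 'a) set"
    and \<pi> :: "nat \<Rightarrow> (nat \<Rightarrow> 'a) \<Rightarrow> (nat \<Rightarrow> 'a)"
  assumes sft: "\<And>n. is_sft (S n) (X n)"
    and maps: "\<And>n. \<pi> n ` X (Suc n) \<subseteq> X n"
    and cont: "\<And>n. continuous_map (subtopology seq_top (X (Suc n)))
                                    (subtopology seq_top (X n)) (\<pi> n)"
    and equiv: "\<And>n x. x \<in> X (Suc n) \<Longrightarrow> shift (\<pi> n x) = \<pi> n (shift x)"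
    and mlc: "MLC1 X \<pi>"
  defines "Y \<equiv> \<lambda>n. chain_recurrent seq_dist (X n) shift"
  shows "(\<forall>n. \<pi> n ` Y (Suc n) \<subseteq> Y n) \<and> MLC1 Y \<pi>"
proof -
  have \<pi>_cont: "agree_continuous_on (X (Suc n)) (\<pi> n)" for n
    using continuous_map_seq_top_imp_agree_continuous_on[OF cont] .
  have into: "\<pi> n ` Y (Suc n) \<subseteq> Y n" for n
    unfolding Y_def
    by (rule image_chain_recurrent_subset[OF sft_shift[OF sft] maps
          sft_agree_uniformly_continuous_on[OF sft \<pi>_cont] equiv])
  have "\<pi> n ` Y (Suc n) \<subseteq> (\<pi> n \<circ> \<pi> (Suc n)) ` Y (Suc (Suc n))" for n
    unfolding Y_def
  proof (rule image_chain_recurrent_subset_image[OF sft sft \<pi>_cont equiv])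
    show "agree_continuous_on (X (Suc (Suc n))) (\<pi> n \<circ> \<pi> (Suc n))"
      by (rule agree_continuous_on_compose[OF \<pi>_cont maps \<pi>_cont])
    show "shift ((\<pi> n \<circ> \<pi> (Suc n)) x) = (\<pi> n \<circ> \<pi> (Suc n)) (shift x)"
      if "x \<in> X (Suc (Suc n))" for x
      using that maps equiv by (simp add: image_subset_iff)
    show "\<pi> n ` X (Suc n) \<subseteq> (\<pi> n \<circ> \<pi> (Suc n)) ` X (Suc (Suc n))"
      using mlc by (simp add: MLC1_def image_comp)
  qed
  moreover have "\<pi> n ` \<pi> (Suc n) ` Y (Suc (Suc n)) \<subseteq> \<pi> n ` Y (Suc n)" for n
    using into[of "Suc n"] by (rule image_mono)
  ultimately have "MLC1 Y \<pi>"
    unfolding MLC1_def by (simp add: image_comp set_eq_subset)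
  with into show ?thesis
    by blast
qed

end
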